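(* Let $\ell$ be an integer with $1<\ell<\infty$. Then under $T_\ell$: (1) for every $k\ge1$ the word $F_k$ is a soliton of speed $\min(\ell,k)$, i.e. $T_\ell$ maps $F_k$ at $p$ to $F_k$ at $p+\min(\ell,k)$; (2) for every slow basic soliton $A$ (a nonempty word in the letters $F,B_a,U_a$, $a\ge1$, containing neither $FF$ nor $FU_a$ consecutively), $T_\ell$ maps $A$ at $p$ to $A$ at $p+1$, i.e. it acts exactly as $T_\infty$ does.
   Context: Box-basket-ball system. A site state is a triple $(a,b,c)$ of nonnegative integers with $a=b-c+1$ (one box, $b$ baskets, $c$ balls). $V=(1,0,0)$, $F=(0,0,1)$, $B_a=(a+1,a,0)$, $U_a=(a,a,1)$ ($a\ge1$), $F_k=F\cdots F$ ($k$ letters). A state is a sequence $(S_i)_{i\in\mathbb Z}$ of site states, all but finitely many equal to $V$. For a word $A=A_1\cdots A_n$, "$A$ at $p$" is the state with $S_{p+j-1}=A_j$ ($1\le j\le n$), vacuum elsewhere. The map $R$: for a carrier $(a,b,c)$ and site $(d,e,f)$, $R$ produces a site $(d',e',f')$ and carrier $(a',b',c')$ with $d'=d+\min(a+b,a+c,b+f)-\min(e+c,d+c,d+b)$, $e'=e+\min(a+b,a+c,b+f)-\min(a+e,d+f,e+f)$, $f'=f+\min(e+c,d+c,d+b)-\min(a+e,d+f,e+f)$, $a'=a-\min(a+b,a+c,b+f)+\min(e+c,d+c,d+b)$, $b'=b-\min(a+b,a+c,b+f)+\min(a+e,d+f,e+f)$, $c'=c-\min(e+c,d+c,d+b)+\min(a+e,d+f,e+f)$.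 Time evolution $T_\ell$ (integer $\ell\ge1$): a carrier starting in state $u_\ell=(\ell,0,0)$ at the far left passes the sites from left to right, each site being updated by $R$; the new state consists of the updated sites. Time evolution $T_\infty$: same with carrier initially $(\infty,0,0)$, where the formulas become $d'=d+b+f-\min(e+c,d+c,d+b)$, $e'=e+b-\min(d,e)$, $f'=\min(e+c,d+c,d+b)-\min(d,e)$, $b'=\min(d,e)$, $c'=c+f+\min(d,e)-\min(e+c,d+c,d+b)$, $a'=\infty$. *)

theory Defs
  imports Main
begin

text \<open>Site states and carriers are triples of integers (a,b,c) (box, baskets, balls).
  Integers (rather than naturals) are used so that the formulas for R are read literally,
  without truncated subtraction.\<close>

type_synonym triple = "int \<times> int \<times> int"

type_synonym bstate = "int \<Rightarrow> triple"

definition V :: triple where "V = (1, 0, 0)"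

definition valid_site :: "triple \<Rightarrow> bool" where
  "valid_site s = (case s of (a, b, c) \<Rightarrow> a \<ge> 0 \<and> b \<ge> 0 \<and> c \<ge> 0 \<and> a = b - c + 1)"

definition R :: "triple \<Rightarrow> triple \<Rightarrow> triple \<times> triple" where
  "R car site = (case car of (a, b, c) \<Rightarrow> case site of (d, e, f) \<Rightarrow>
     let m1 = min (a + b) (min (a + c) (b + f));
         m2 = min (e + c) (min (d + c) (d + b));
         m3 = min (a + e) (min (d + f) (e + f))
     in ((d + m1 - m2, e + m1 - m3, f + m2 - m3),
         (a - m1 + m2, b - m1 + m3, c - m2 + m3)))"

text \<open>The map R with carrier (infinity,b,c); the carrier is represented by (b,c).\<close>
definition Rinf :: "int \<times> int \<Rightarrow> triple \<Rightarrow> triple \<times> (int \<times> int)" where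
  "Rinf car site = (case car of (b, c) \<Rightarrow> case site of (d, e, f) \<Rightarrow>
     let m2 = min (e + c) (min (d + c) (d + b))
     in ((d + b + f - m2, e + b - min d e, m2 - min d e),
         (min d e, c + f + min d e - m2)))"

fun carrier_at :: "('c \<Rightarrow> triple \<Rightarrow> triple \<times> 'c) \<Rightarrow> 'c \<Rightarrow> bstate \<Rightarrow> int \<Rightarrow> nat \<Rightarrow> 'c" where
  "carrier_at Rl c0 S N 0 = c0"
| "carrier_at Rl c0 S N (Suc n) = snd (Rl (carrier_at Rl c0 S N n) (S (N + int n)))"

text \<open>Time evolution: the carrier starts at the far left (left of every non-vacuum site;
  vacuum sites left of N are unchanged and leave the carrier u unchanged) and passes
  all sites from left to right.\<close>
definition evolve :: "('c \<Rightarrow> triple \<Rightarrow> triple \<times> 'c) \<Rightarrow> 'c \<Rightarrow> bstate \<Rightarrow> bstate" where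
  "evolve Rl c0 S = (let N = (SOME N. \<forall>j<N. S j = V) in
     (\<lambda>i. if i < N then V else fst (Rl (carrier_at Rl c0 S N (nat (i - N))) (S i))))"

definition T :: "nat \<Rightarrow> bstate \<Rightarrow> bstate" where
  "T l = evolve R (int l, 0, 0)"

definition T_inf :: "bstate \<Rightarrow> bstate" where
  "T_inf = evolve Rinf (0, 0)"

datatype letter = LF | LB nat | LU nat

fun site_of :: "letter \<Rightarrow> triple" where
  "site_of LF = (0, 0, 1)"
| "site_of (LB a) = (int a + 1, int a, 0)"
| "site_of (LU a) = (int a, int a, 1)"

fun letter_ok :: "letter \<Rightarrow> bool" where
  "letter_ok LF = True"
| "letter_ok (LB a) = (a \<ge> 1)"
| "letter_ok (LU a) = (a \<ge> 1)"

definition at :: "letter list \<Rightarrow> int \<Rightarrow> bstate" where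
  "at w p = (\<lambda>i. if p \<le> i \<and> i < p + int (length w) then site_of (w ! nat (i - p)) else V)"

fun is_U :: "letter \<Rightarrow> bool" where
  "is_U (LU a) = True" | "is_U _ = False"

definition slow_basic_soliton :: "letter list \<Rightarrow> bool" where
  "slow_basic_soliton w = (w \<noteq> [] \<and> (\<forall>x\<in>set w. letter_ok x) \<and>
     (\<forall>j. Suc j < length w \<longrightarrow> w ! j = LF \<longrightarrow> \<not> (w ! Suc j = LF \<or> is_U (w ! Suc j))))"

end

theory Submission
  imports Defs
begin

text \<open>
  Both parts of the theorem are proved by exhibiting the carrier explicitly.
  A time evolution is determined by the local rule, so it suffices to give a
  "carrier profile" E (the carrier state in front of every site) that starts as
  the initial carrier, and under which every local update produces the claimed
  new site together with the next carrier value (lemma evolve_eqI).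

  Slow basic solitons: every letter is a site B_a or U_a (with V = B_0 and F = U_0).
  For ell at least 2 the carrier in front of site j is the site j-1 "stored" in the
  carrier, (ell - 1 + d, e, f) for R and (e, f) for the infinite carrier.  For every
  admissible pair of consecutive sites the carrier hands out the stored site and
  stores the current one, so the word moves one step to the right
  (lemma evolve_shift_right).  The absence of FF and F U_a is exactly what makes all
  consecutive pairs admissible.

  The word F_k: the carrier always has the form (ell - b, 0, b), where b is the number
  of balls carried; b grows by one per ball up to min(ell,k) and is then emptied one
  ball per site, which places the k balls min(ell,k) sites further right.
\<close>

text \<open>The hypothesis on S N ensures that the starting point chosen in evolve is not
  to the right of N.\<close>
lemma evolve_eqI:
  assumes first_site: "S N \<noteq> V" and vacuum_left: "\<forall>j<N. S j = V"
    and carrier_init: "\<forall>j\<le>N. E j = c0" and result_left: "\<forall>j<N. S' j = V"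
    and local_update: "\<forall>j. Rl (E j) (S j) = (S' j, E (j + 1))"
  shows "evolve Rl c0 S = S'"
proof
  fix i
  define N0 where "N0 = (SOME N. \<forall>j<N. S j = V)"
  have "\<forall>j<N0. S j = V"
    unfolding N0_def using someI[of "\<lambda>N. \<forall>j<N. S j = V" N] vacuum_left by blast
  then have N0_le: "N0 \<le> N" using first_site by force
  have carrier: "carrier_at Rl c0 S N0 n = E (N0 + int n)" for n
  proof (induction n)
    case 0
    then show ?case using carrier_init N0_le by simp
  next
    case (Suc n)
    then show ?case using local_update[rule_format, of "N0 + int n"] by (simp add: ac_simps)
  qed
  show "evolve Rl c0 S i = S' i"
  proof (cases "i < N0")
    case True
    then show ?thesis using result_left N0_le
      unfolding evolve_def N0_def[symmetric] by (simp add: Let_def)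
  next
    case False
    then have "N0 + int (nat (i - N0)) = i" by simp
    then show ?thesis using False carrier[of "nat (i - N0)"] local_update[rule_format, of i]
      unfolding evolve_def N0_def[symmetric] by (simp add: Let_def)
  qed
qed

lemma evolve_shift_right:
  fixes enc :: "triple \<Rightarrow> 'c"
  assumes first_site: "S p \<noteq> V" and vacuum_left: "\<forall>j<p. S j = V"
    and enc_V: "enc V = c0"
    and exchange: "\<And>j. Rl (enc (S (j - 1))) (S j) = (S (j - 1), enc (S j))"
  shows "evolve Rl c0 S = (\<lambda>j. S (j - 1))"
proof (rule evolve_eqI[where N = p and E = "\<lambda>j. enc (S (j - 1))"])
  show "\<forall>j\<le>p. enc (S (j - 1)) = c0" using vacuum_left enc_V by simp
  show "\<forall>j<p. S (j - 1) = V" using vacuum_left by simp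
  show "\<forall>j. Rl (enc (S (j - 1))) (S j) = (S (j - 1), enc (S (j + 1 - 1)))"
    using exchange by simp
qed (use first_site vacuum_left in auto)

definition site_B :: "int \<Rightarrow> triple" where "site_B a = (a + 1, a, 0)"
definition site_U :: "int \<Rightarrow> triple" where "site_U a = (a, a, 1)"

lemma V_eq_site_B: "V = site_B 0"
  by (simp add: V_def site_B_def)

text \<open>Carriers storing a site: for T_ell the stored site (d,e,f) is kept as
  (ell - 1 + d, e, f), so the vacuum is stored as u_ell; for T_infinity as (e,f).\<close>
definition store :: "nat \<Rightarrow> triple \<Rightarrow> triple" where
  "store l s = (case s of (d, e, f) \<Rightarrow> (int l - 1 + d, e, f))"
definition store_inf :: "triple \<Rightarrow> int \<times> int" where
  "store_inf s = (case s of (d, e, f) \<Rightarrow> (e, f))"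

text \<open>Pairs (x,y) of consecutive sites that the storing carrier passes by
  exchanging x for y: any pair of B's and U's except U_0 U_b (that is, F U_b or FF).\<close>
definition admissible_pair :: "triple \<Rightarrow> triple \<Rightarrow> bool" where
  "admissible_pair x y = (\<exists>a b. a \<ge> 0 \<and> b \<ge> 0 \<and>
     ((x = site_B a \<and> y = site_B b) \<or> (x = site_B a \<and> y = site_U b)
      \<or> (x = site_U a \<and> y = site_B b) \<or> (a \<ge> 1 \<and> x = site_U a \<and> y = site_U b)))"

lemma R_exchange:
  assumes "admissible_pair x y" and "2 \<le> l"
  shows "R (store l x) y = (x, store l y)"
  using assms unfolding admissible_pair_def
  by (auto simp: R_def site_B_def site_U_def store_def Let_def min_def)

lemma Rinf_exchange:
  assumes "admissible_pair x y"
  shows "Rinf (store_inf x) y = (x, store_inf y)"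
  using assms unfolding admissible_pair_def
  by (auto simp: Rinf_def site_B_def site_U_def store_inf_def Let_def min_def)

lemma letter_site:
  assumes "letter_ok x"
  obtains a where "a \<ge> 0" "site_of x = site_B a \<or> site_of x = site_U a" "x \<noteq> LF \<Longrightarrow> a \<ge> 1"
  using assms by (cases x) (auto simp: site_B_def site_U_def)

lemma admissible_letters:
  assumes "letter_ok x" "letter_ok y" and no_FF_FU: "x = LF \<Longrightarrow> y \<noteq> LF \<and> \<not> is_U y"
  shows "admissible_pair (site_of x) (site_of y)"
proof (cases "x = LF")
  case True
  then obtain b where "b \<ge> 1" "y = LB b" using no_FF_FU \<open>letter_ok y\<close> by (cases y) auto
  then show ?thesis unfolding admissible_pair_def using True
    by (intro exI[of _ 0] exI[of _ "int b"]) (auto simp: site_U_def site_B_def)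
next
  case False
  obtain a where "a \<ge> 1" "site_of x = site_B a \<or> site_of x = site_U a"
    using letter_site[OF \<open>letter_ok x\<close>] False by metis
  moreover obtain b where "b \<ge> 0" "site_of y = site_B b \<or> site_of y = site_U b"
    using letter_site[OF \<open>letter_ok y\<close>] by metis
  ultimately show ?thesis unfolding admissible_pair_def by (intro exI[of _ a] exI[of _ b]) auto
qed

lemma admissible_from_V:
  "admissible_pair V y" if "y = V \<or> (\<exists>b\<ge>0. y = site_B b \<or> y = site_U b)"
  using that unfolding admissible_pair_def V_eq_site_B by (metis order_refl)

lemma admissible_to_V:
  "admissible_pair x V" if "\<exists>a\<ge>0. x = site_B a \<or> x = site_U a"
  using that unfolding admissible_pair_def V_eq_site_B by (metis order_refl)

lemma at_inside: "p \<le> j \<Longrightarrow> j < p + int (length w) \<Longrightarrow> at w p j = site_of (w ! nat (j - p))"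
  by (simp add: at_def)

lemma at_outside: "\<not> (p \<le> j \<and> j < p + int (length w)) \<Longrightarrow> at w p j = V"
  unfolding at_def by auto

lemma at_site:
  assumes "\<forall>x\<in>set w. letter_ok x"
  shows "at w p j = V \<or> (\<exists>b\<ge>0. at w p j = site_B b \<or> at w p j = site_U b)"
proof (cases "p \<le> j \<and> j < p + int (length w)")
  case True
  then have "letter_ok (w ! nat (j - p))" using assms by auto
  then show ?thesis using True at_inside[of p j w] by (metis letter_site)
qed (simp add: at_outside)

lemma slow_soliton_admissible:
  assumes A: "slow_basic_soliton A"
  shows "admissible_pair (at A p (j - 1)) (at A p j)"
proof -
  have ok: "\<forall>x\<in>set A. letter_ok x" using A unfolding slow_basic_soliton_def by auto
  show ?thesis
  proof (cases "p \<le> j - 1 \<and> j - 1 < p + int (length A)")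
    case False
    then show ?thesis using at_outside admissible_from_V at_site[OF ok] by metis
  next
    case inside: True
    define i where "i = nat (j - 1 - p)"
    have x: "at A p (j - 1) = site_of (A ! i)" using inside i_def by (simp add: at_inside)
    have ok_i: "letter_ok (A ! i)" using ok inside i_def by auto
    show ?thesis
    proof (cases "Suc i < length A")
      case False
      then have "at A p j = V" using i_def inside by (intro at_outside) auto
      then show ?thesis using x admissible_to_V letter_site[OF ok_i] by metis
    next
      case True
      have "nat (j - p) = Suc i" using inside i_def by auto
      then have y: "at A p j = site_of (A ! Suc i)" using inside True i_def by (simp add: at_inside)
      have "A ! i = LF \<Longrightarrow> A ! Suc i \<noteq> LF \<and> \<not> is_U (A ! Suc i)"
        using A True unfolding slow_basic_soliton_def by blast
      then show ?thesis unfolding x y using ok True by (intro admissible_letters) auto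
    qed
  qed
qed

lemma slow_soliton_shift:
  assumes A: "slow_basic_soliton A" and l: "2 \<le> l"
  shows "T l (at A p) = at A (p + 1)" and "T_inf (at A p) = at A (p + 1)"
proof -
  have first_site: "at A p p \<noteq> V"
  proof -
    have "A \<noteq> []" "letter_ok (A ! 0)" using A unfolding slow_basic_soliton_def by auto
    then show ?thesis by (cases "A ! 0") (auto simp: at_def V_def)
  qed
  have vacuum_left: "\<forall>j<p. at A p j = V" by (simp add: at_def)
  have shifted: "at A (p + 1) = (\<lambda>j. at A p (j - 1))" by (auto simp: at_def algebra_simps)
  show "T l (at A p) = at A (p + 1)"
    unfolding T_def shifted
    by (rule evolve_shift_right[OF first_site vacuum_left, where enc = "store l"])
      (simp add: store_def V_def, rule R_exchange[OF slow_soliton_admissible[OF A] l])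
  show "T_inf (at A p) = at A (p + 1)"
    unfolding T_inf_def shifted
    by (rule evolve_shift_right[OF first_site vacuum_left, where enc = store_inf])
      (simp add: store_inf_def V_def, rule Rinf_exchange[OF slow_soliton_admissible[OF A]])
qed

text \<open>Number of balls in the carrier (capacity L) in front of the relative position i,
  when the word F_K starts at relative position 0.\<close>
definition balls_carried :: "int \<Rightarrow> int \<Rightarrow> int \<Rightarrow> int" where
  "balls_carried L K i =
     (if i \<le> 0 then 0 else if i \<le> K then min i L else max 0 (min K L - (i - K)))"

lemma F_step:
  assumes "2 \<le> L" and "1 \<le> K"
  shows "R (L - balls_carried L K i, 0, balls_carried L K i)
           (if 0 \<le> i \<and> i < K then (0, 0, 1) else (1, 0, 0)) =
         ((if min L K \<le> i \<and> i < min L K + K then (0, 0, 1) else (1, 0, 0)),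
          (L - balls_carried L K (i + 1), 0, balls_carried L K (i + 1)))"
proof -
  consider "i < 0" | "0 \<le> i \<and> i < K" | "K \<le> i" by linarith
  then show ?thesis
    by cases (use assms in \<open>auto simp: R_def Let_def balls_carried_def min_def max_def\<close>)
qed

lemma at_replicate_F:
  "at (replicate k LF) q j = (if 0 \<le> j - q \<and> j - q < int k then (0, 0, 1) else (1, 0, 0))"
  by (auto simp: at_def V_def)

lemma F_shift:
  assumes l: "2 \<le> l" and k: "1 \<le> k"
  shows "T l (at (replicate k LF) p) = at (replicate k LF) (p + int (min l k))"
  unfolding T_def
proof (rule evolve_eqI[where N = p and
      E = "\<lambda>j. (int l - balls_carried (int l) (int k) (j - p), 0, balls_carried (int l) (int k) (j - p))"])
  show "\<forall>j. R (int l - balls_carried (int l) (int k) (j - p), 0, balls_carried (int l) (int k) (j - p))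
              (at (replicate k LF) p j) =
            (at (replicate k LF) (p + int (min l k)) j,
             int l - balls_carried (int l) (int k) (j + 1 - p), 0, balls_carried (int l) (int k) (j + 1 - p))"
  proof
    fix j
    have shifted: "at (replicate k LF) (p + int (min l k)) j =
        (if min (int l) (int k) \<le> j - p \<and> j - p < min (int l) (int k) + int k
         then (0, 0, 1) else (1, 0, 0))"
      by (auto simp: at_replicate_F)
    have next_position: "j + 1 - p = (j - p) + 1" by simp
    show "R (int l - balls_carried (int l) (int k) (j - p), 0, balls_carried (int l) (int k) (j - p))
              (at (replicate k LF) p j) =
            (at (replicate k LF) (p + int (min l k)) j,
             int l - balls_carried (int l) (int k) (j + 1 - p), 0, balls_carried (int l) (int k) (j + 1 - p))"
      unfolding shifted next_position at_replicate_F[of k p] by (rule F_step) (use l k in auto)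
  qed
qed (use k in \<open>auto simp: at_replicate_F V_def balls_carried_def\<close>)

theorem mainTheorem6:
  fixes l :: nat
  assumes "1 < l"
  shows "(\<forall>k::nat. k \<ge> 1 \<longrightarrow> (\<forall>p::int.
            T l (at (replicate k LF) p) = at (replicate k LF) (p + int (min l k))))
       \<and> (\<forall>A. slow_basic_soliton A \<longrightarrow> (\<forall>p::int.
            T l (at A p) = at A (p + 1) \<and> T_inf (at A p) = at A (p + 1)))"
proof -
  have l: "2 \<le> l" using assms by simp
  show ?thesis using F_shift[OF l] slow_soliton_shift[OF _ l] by blast
qed

end
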